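(* Let $m\geq4$ be an integer, let $G$ be an $m$-free digraph, let $v\in V(G)$ and let $k$ be an integer with $1\leq k\leq m-3$. Put $V_1=\bigcup_{i=1}^{k+1}N_i^+(v)$ and $V_2=V(G)\setminus V_1$. Then the set of edges of $G$ from $V_1$ to $V_2$ equals $E(N^+_{k+1}(v),N^+_{k+2}(v))$, so it has exactly $p_k(v)$ elements, and the number of pairs $(a,b)\in V_1\times V_2$ such that neither $(a,b)$ nor $(b,a)$ is an edge is at least $s_k(v)$.
   Context: All digraphs are finite, without loops and without parallel edges. A digraph is $m$-free if it has no directed cycle of length at most $m$. For a vertex $v$ and $i\geq 0$, $N_i^+(v)$ is the set of vertices $u$ such that the shortest directed path from $v$ to $u$ has length exactly $i$. For $A,B\subseteq V(G)$, $E(A,B)$ is the set of edges $(a,b)$ with $a\in A$, $b\in B$. A directed path $(v_0,\dots,v_k)$ consists of distinct vertices with $(v_i,v_{i+1})$ an edge for each $i$; its length is $k$. It is induced if every edge of $G$ with both ends in $\{v_0,\dots,v_k\}$ is one of the edges $(v_i,v_{i+1})$; it is a shortest induced directed path if it is induced and $v_k\in N_k^+(v_0)$. Let $\mathscr{P}(G)$ be the set of shortest induced directed paths of $G$. For an integer $k\geq1$ and $v\in V(G)$: $P_k(v)$ is the set of triples $(x,y,z)$ of vertices for which there exist vertices $w_1,\dots,w_k$ with $(x,w_1,\dots,w_k,y,z)\in\mathscr{P}(G)$ and $x=v$. $P'_k(v)$ (resp. $Q'_k(v)$) is the set of triples $(x,y,z)$ for which there exist $w_1,\dots,w_k$ with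 $(x,y,w_1,\dots,w_k,z)\in\mathscr{P}(G)$ and $x=v$ (resp. $y=v$). $p_k(v)=|P_k(v)|$, $p'_k(v)=|P'_k(v)|$, $q'_k(v)=|Q'_k(v)|$. For $1\leq k\leq m-3$: $s_k(v)=\sum_{i=k}^{m-3}p'_i(v)+\sum_{i=1}^{k}q'_i(v)$. *)

theory Defs
  imports Main
begin

definition digraph :: "'a set \<Rightarrow> ('a \<times> 'a) set \<Rightarrow> bool" where
  "digraph V E \<longleftrightarrow> finite V \<and> E \<subseteq> V \<times> V \<and> (\<forall>x. (x, x) \<notin> E)"

text \<open>Directed cycle given by the list of its distinct vertices v0 ... v(l-1); its length is l.\<close>
definition dicycle :: "('a \<times> 'a) set \<Rightarrow> 'a list \<Rightarrow> bool" where
  "dicycle E xs \<longleftrightarrow> xs \<noteq> [] \<and> distinct xs \<and>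
     (\<forall>i. i + 1 < length xs \<longrightarrow> (xs ! i, xs ! (i + 1)) \<in> E) \<and> (last xs, hd xs) \<in> E"

definition m_free :: "nat \<Rightarrow> ('a \<times> 'a) set \<Rightarrow> bool" where
  "m_free m E \<longleftrightarrow> (\<forall>xs. dicycle E xs \<longrightarrow> length xs > m)"

definition outN :: "'a set \<Rightarrow> ('a \<times> 'a) set \<Rightarrow> nat \<Rightarrow> 'a \<Rightarrow> 'a set" where
  "outN V E i v = {u \<in> V. (v, u) \<in> E ^^ i \<and> (\<forall>j<i. (v, u) \<notin> E ^^ j)}"

definition edges_between :: "('a \<times> 'a) set \<Rightarrow> 'a set \<Rightarrow> 'a set \<Rightarrow> ('a \<times> 'a) set" where
  "edges_between E A B = {(a, b) \<in> E. a \<in> A \<and> b \<in> B}"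

text \<open>Directed path (v0,...,vk) as a nonempty list of distinct vertices; its length is k.\<close>
definition dipath :: "('a \<times> 'a) set \<Rightarrow> 'a list \<Rightarrow> bool" where
  "dipath E xs \<longleftrightarrow> xs \<noteq> [] \<and> distinct xs \<and>
     (\<forall>i. i + 1 < length xs \<longrightarrow> (xs ! i, xs ! (i + 1)) \<in> E)"

definition induced_dipath :: "('a \<times> 'a) set \<Rightarrow> 'a list \<Rightarrow> bool" where
  "induced_dipath E xs \<longleftrightarrow> dipath E xs \<and>
     (\<forall>i j. i < length xs \<longrightarrow> j < length xs \<longrightarrow> (xs ! i, xs ! j) \<in> E \<longrightarrow> j = i + 1)"

definition sip :: "'a set \<Rightarrow> ('a \<times> 'a) set \<Rightarrow> 'a list \<Rightarrow> bool" where
  "sip V E xs \<longleftrightarrow> induced_dipath E xs \<and> last xs \<in> outN V E (length xs - 1) (hd xs)"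

definition P_set :: "'a set \<Rightarrow> ('a \<times> 'a) set \<Rightarrow> nat \<Rightarrow> 'a \<Rightarrow> ('a \<times> 'a \<times> 'a) set" where
  "P_set V E k v = {(x, y, z). \<exists>ws. length ws = k \<and> sip V E (x # ws @ [y, z]) \<and> x = v}"

definition P'_set :: "'a set \<Rightarrow> ('a \<times> 'a) set \<Rightarrow> nat \<Rightarrow> 'a \<Rightarrow> ('a \<times> 'a \<times> 'a) set" where
  "P'_set V E k v = {(x, y, z). \<exists>ws. length ws = k \<and> sip V E (x # y # ws @ [z]) \<and> x = v}"

definition Q'_set :: "'a set \<Rightarrow> ('a \<times> 'a) set \<Rightarrow> nat \<Rightarrow> 'a \<Rightarrow> ('a \<times> 'a \<times> 'a) set" where
  "Q'_set V E k v = {(x, y, z). \<exists>ws. length ws = k \<and> sip V E (x # y # ws @ [z]) \<and> y = v}"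

definition p_num :: "'a set \<Rightarrow> ('a \<times> 'a) set \<Rightarrow> nat \<Rightarrow> 'a \<Rightarrow> nat" where
  "p_num V E k v = card (P_set V E k v)"

definition p'_num :: "'a set \<Rightarrow> ('a \<times> 'a) set \<Rightarrow> nat \<Rightarrow> 'a \<Rightarrow> nat" where
  "p'_num V E k v = card (P'_set V E k v)"

definition q'_num :: "'a set \<Rightarrow> ('a \<times> 'a) set \<Rightarrow> nat \<Rightarrow> 'a \<Rightarrow> nat" where
  "q'_num V E k v = card (Q'_set V E k v)"

definition s_num :: "nat \<Rightarrow> 'a set \<Rightarrow> ('a \<times> 'a) set \<Rightarrow> nat \<Rightarrow> 'a \<Rightarrow> nat" where
  "s_num m V E k v = (\<Sum>i = k..m - 3. p'_num V E i v) + (\<Sum>i = 1..k. q'_num V E i v)"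

end

theory Submission
  imports Defs
begin

(* Write L for the union of the layers N_1^+(v), ..., N_{k+1}^+(v).  An edge (a,b) can
   raise the distance from v by at most one, and it cannot return to v because that would
   close a directed cycle of length at most k+2 <= m.  Hence every edge from L to V - L goes
   from layer k+1 to layer k+2, and each such edge (y,z) extends to a shortest induced path
   v,...,y,z, because in an m-free digraph every geodesic walk of length < m is a shortest
   induced path.

   For the bound, every triple in P'_i(v) (k <= i <= m-3) yields the non-adjacent pair
   (y,z) with y in layer 1 and z in layer i+2, and every triple in Q'_i(v) (1 <= i <= k)
   yields the non-adjacent pair (z,x) with z in layer i+1 and x outside L; non-adjacency
   holds because the path is induced.  The layer numbers identify the index i, so all these
   pairs are distinct, and counting them gives s_k(v). *)

section \<open>Distance layers\<close>

lemma outN_iff: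
  "u \<in> outN V E i v \<longleftrightarrow> u \<in> V \<and> (v, u) \<in> E ^^ i \<and> (\<forall>j<i. (v, u) \<notin> E ^^ j)"
  unfolding outN_def by auto

lemma outN_unique: "u \<in> outN V E i v \<Longrightarrow> u \<in> outN V E j v \<Longrightarrow> i = j"
  unfolding outN_iff by (metis linorder_neqE_nat)

lemma outN_exists:
  assumes "u \<in> V" "(v, u) \<in> E ^^ n"
  shows "\<exists>d\<le>n. u \<in> outN V E d v"
proof -
  define d where "d = (LEAST j. (v, u) \<in> E ^^ j)"
  have "(v, u) \<in> E ^^ d" unfolding d_def using assms(2) by (rule LeastI)
  moreover have "d \<le> n" unfolding d_def using assms(2) by (rule Least_le)
  moreover have "\<forall>j<d. (v, u) \<notin> E ^^ j" unfolding d_def using not_less_Least by blast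
  ultimately show ?thesis using assms(1) by (auto simp: outN_iff)
qed

lemma outN_edge:
  assumes "(a, b) \<in> E" "a \<in> outN V E i v" "b \<in> V"
  shows "\<exists>d\<le>Suc i. b \<in> outN V E d v"
proof -
  have "(v, b) \<in> E ^^ Suc i" using assms(1,2) by (auto simp: outN_iff intro: relpow_Suc_I)
  then show ?thesis using assms(3) by (rule outN_exists[rotated])
qed

definition depth :: "'a set \<Rightarrow> ('a \<times> 'a) set \<Rightarrow> 'a \<Rightarrow> 'a \<Rightarrow> nat" where
  "depth V E v u = (LEAST i. u \<in> outN V E i v)"

lemma depth_eq: "u \<in> outN V E i v \<Longrightarrow> depth V E v u = i"
  unfolding depth_def by (rule Least_equality) (auto dest: outN_unique)

definition inner_layers :: "'a set \<Rightarrow> ('a \<times> 'a) set \<Rightarrow> nat \<Rightarrow> 'a \<Rightarrow> 'a set" where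
  "inner_layers V E k v = (\<Union>i\<in>{1..k + 1}. outN V E i v)"

lemma outN_in_inner_layers_iff:
  "u \<in> outN V E j v \<Longrightarrow> u \<in> inner_layers V E k v \<longleftrightarrow> 1 \<le> j \<and> j \<le> k + 1"
  unfolding inner_layers_def by (auto dest: outN_unique)

lemma inner_layersE:
  assumes "u \<in> inner_layers V E k v"
  obtains j where "1 \<le> j" "j \<le> k + 1" "u \<in> outN V E j v"
  using assms unfolding inner_layers_def by auto

definition nonadjacent_pairs :: "('a \<times> 'a) set \<Rightarrow> 'a set \<Rightarrow> 'a set \<Rightarrow> ('a \<times> 'a) set" where
  "nonadjacent_pairs E A B = {(a, b). a \<in> A \<and> b \<in> B \<and> (a, b) \<notin> E \<and> (b, a) \<notin> E}"

section \<open>Walks and closed walks\<close>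

lemma walk_seg:
  assumes "\<forall>i<n. (f i, f (Suc i)) \<in> E" "p \<le> q" "q \<le> n"
  shows "(f p, f q) \<in> E ^^ (q - p)"
proof -
  have "(f (p + 0), f (p + (q - p))) \<in> E ^^ (q - p)"
    unfolding relpow_fun_conv by (rule exI[of _ "\<lambda>i. f (p + i)"]) (use assms in auto)
  then show ?thesis using assms by simp
qed

text \<open>Every nontrivial closed walk contains a directed cycle that is not longer:
  either the walk is itself a cycle, or a repeated vertex cuts out a shorter closed walk.\<close>
lemma closed_walk_dicycle:
  assumes "(b, b) \<in> E ^^ n" "1 \<le> n"
  shows "\<exists>xs. dicycle E xs \<and> length xs \<le> n"
  using assms
proof (induction n arbitrary: b rule: less_induct)
  case (less n)
  obtain f where f0: "f 0 = b" and fn: "f n = b" and fe: "\<forall>i<n. (f i, f (Suc i)) \<in> E"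
    using less.prems(1) unfolding relpow_fun_conv by blast
  define xs where "xs = map f [0..<n]"
  show ?case
  proof (cases "distinct xs")
    case True
    have "last xs = f (n - 1)" "hd xs = f n"
      using less.prems(2) f0 fn unfolding xs_def by (simp_all add: last_map hd_map)
    moreover have "(f (n - 1), f n) \<in> E"
      using fe less.prems(2) by (metis Suc_pred' diff_less less_numeral_extra(1) order_less_le_trans)
    ultimately have "dicycle E xs"
      using True fe less.prems(2) unfolding dicycle_def xs_def by auto
    then show ?thesis unfolding xs_def by auto
  next
    case False
    then obtain p q where pq: "p < q" "q < n" "f p = f q"
      unfolding xs_def distinct_conv_nth by simp (metis linorder_neqE_nat)
    have "(f p, f p) \<in> E ^^ (q - p)" using walk_seg[OF fe, of p q] pq by simp
    then have "\<exists>ys. dicycle E ys \<and> length ys \<le> q - p" using pq by (intro less.IH) auto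
    then show ?thesis using pq by (meson diff_le_self le_trans less_imp_le)
  qed
qed

lemma no_short_closed_walk:
  assumes "m_free m E" "(a, a) \<in> E ^^ n" "1 \<le> n" "n \<le> m"
  shows False
  using closed_walk_dicycle[OF assms(2,3)] assms(1,4) unfolding m_free_def by force

lemma no_edge_to_root:
  assumes "m_free m E" "u \<in> outN V E j v" "j < m"
  shows "(u, v) \<notin> E"
proof
  assume uv: "(u, v) \<in> E"
  have "(v, u) \<in> E ^^ j" using assms(2) by (simp add: outN_iff)
  then have "(v, v) \<in> E ^^ Suc j" using uv by (rule relpow_Suc_I)
  then show False using no_short_closed_walk[OF assms(1), of v "Suc j"] assms(3) by simp
qed

section \<open>Shortest induced paths\<close>

text \<open>In an m-free digraph a geodesic walk from v of length n < m is a shortest induced path: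
  a chord going forward would shortcut the geodesic, a chord going backward would close a
  short cycle, and a repeated vertex would again shortcut the geodesic.\<close>
lemma geodesic_walk_sip:
  assumes mf: "m_free m E" and f0: "f 0 = v"
    and fe: "\<forall>i<n. (f i, f (Suc i)) \<in> E" and fn: "f n \<in> outN V E n v" and nm: "n + 1 \<le> m"
  shows "sip V E (map f [0..<Suc n])"
proof -
  have fp: "(v, f p) \<in> E ^^ p" if "p \<le> n" for p using walk_seg[OF fe, of 0 p] that f0 by simp
  have fq: "(f q, f n) \<in> E ^^ (n - q)" if "q \<le> n" for q using walk_seg[OF fe, of q n] that by simp
  have short: False if "(v, f p) \<in> E ^^ j" "j < p" "p \<le> n" for j p
  proof -
    have "(v, f n) \<in> E ^^ (j + (n - p))"
      using that(1) fq[OF that(3)] unfolding relpow_add by blast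
    then show False using fn that unfolding outN_iff by auto
  qed
  have chord: "q = Suc p" if "p \<le> n" "q \<le> n" "(f p, f q) \<in> E" for p q
  proof (rule ccontr)
    assume ne: "q \<noteq> Suc p"
    show False
    proof (cases "q \<le> p")
      case True
      have "(f q, f p) \<in> E ^^ (p - q)" using walk_seg[OF fe True \<open>p \<le> n\<close>] .
      then have "(f q, f q) \<in> E ^^ Suc (p - q)" using that(3) by (rule relpow_Suc_I)
      moreover have "Suc (p - q) \<le> m" using that(1) nm by linarith
      ultimately show False by (intro no_short_closed_walk[OF mf]) simp_all
    next
      case False
      have "(v, f q) \<in> E ^^ Suc p" using fp[OF that(1)] that(3) by (rule relpow_Suc_I)
      moreover have "Suc p < q" using False ne by simp
      ultimately show False using short that(2) by blast
    qed
  qed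
  have dist: "f p \<noteq> f q" if "p < q" "q \<le> n" for p q
  proof
    assume "f p = f q"
    then have "(v, f q) \<in> E ^^ p" using fp[of p] that by simp
    then show False using short that by blast
  qed
  let ?xs = "map f [0..<Suc n]"
  have "distinct ?xs" unfolding distinct_conv_nth
    using dist by (auto simp del: upt_Suc) (metis linorder_neqE_nat less_Suc_eq_le)
  moreover have "induced_dipath E ?xs"
    unfolding induced_dipath_def dipath_def
    using calculation fe chord by (auto simp del: upt_Suc)
  moreover have "last ?xs = f n" by simp
  moreover have "hd ?xs = v" using f0 by (simp del: upt_Suc add: hd_map)
  ultimately show ?thesis unfolding sip_def using fn by simp
qed

lemma dipath_seg:
  assumes "dipath E xs" "p \<le> q" "q < length xs"
  shows "(xs ! p, xs ! q) \<in> E ^^ (q - p)"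
proof -
  have "\<forall>i<length xs - 1. (xs ! i, xs ! Suc i) \<in> E" using assms(1) unfolding dipath_def by auto
  from walk_seg[OF this, of p q] assms show ?thesis by auto
qed

lemma sip_edge: "sip V E xs \<Longrightarrow> i + 1 < length xs \<Longrightarrow> (xs ! i, xs ! (i + 1)) \<in> E"
  unfolding sip_def induced_dipath_def dipath_def by blast

lemma sip_outN:
  assumes dg: "digraph V E" and s: "sip V E xs" and p: "p < length xs"
  shows "xs ! p \<in> outN V E p (hd xs)"
proof -
  have dp: "dipath E xs" using s unfolding sip_def induced_dipath_def by auto
  have ne: "xs \<noteq> []" using dp unfolding dipath_def by auto
  have lastN: "last xs \<in> outN V E (length xs - 1) (hd xs)" using s unfolding sip_def by auto
  have hd0: "hd xs = xs ! 0" and last': "last xs = xs ! (length xs - 1)"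
    using ne by (simp_all add: hd_conv_nth last_conv_nth)
  have inV: "xs ! p \<in> V"
  proof (cases "p = length xs - 1")
    case True then show ?thesis using lastN last' by (simp add: outN_iff)
  next
    case False
    then have "(xs ! p, xs ! (p + 1)) \<in> E" using sip_edge[OF s] p by simp
    then show ?thesis using dg unfolding digraph_def by auto
  qed
  have a: "(hd xs, xs ! p) \<in> E ^^ p" using dipath_seg[OF dp, of 0 p] p hd0 by simp
  have b: "(xs ! p, last xs) \<in> E ^^ (length xs - 1 - p)"
    using dipath_seg[OF dp, of p "length xs - 1"] p last' by simp
  have "(hd xs, xs ! p) \<notin> E ^^ j" if "j < p" for j
  proof
    assume "(hd xs, xs ! p) \<in> E ^^ j"
    then have "(hd xs, last xs) \<in> E ^^ (j + (length xs - 1 - p))" using b unfolding relpow_add by blast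
    then show False using lastN that p unfolding outN_iff by auto
  qed
  then show ?thesis using inV a by (simp add: outN_iff)
qed

lemma sip_tl:
  assumes s: "sip V E (x # xs)" and ne: "xs \<noteq> []"
  shows "sip V E xs"
proof -
  have lastN: "last xs \<in> outN V E (length xs) x" using s ne unfolding sip_def by simp
  have ind: "induced_dipath E (x # xs)" using s unfolding sip_def by blast
  then have dist: "distinct xs" unfolding induced_dipath_def dipath_def by simp
  have chord: "\<forall>i j. i < length (x # xs) \<longrightarrow> j < length (x # xs) \<longrightarrow>
                  ((x # xs) ! i, (x # xs) ! j) \<in> E \<longrightarrow> j = i + 1"
    using ind unfolding induced_dipath_def by blast
  have "(xs ! i, xs ! (i + 1)) \<in> E" if "i + 1 < length xs" for i
    using sip_edge[OF s, of "Suc i"] that by simp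
  moreover have "j = i + 1" if "i < length xs" "j < length xs" "(xs ! i, xs ! j) \<in> E" for i j
    using chord[rule_format, of "Suc i" "Suc j"] that by simp
  ultimately have ind': "induced_dipath E xs"
    using ne dist unfolding induced_dipath_def dipath_def by blast
  have x_hd: "(x, hd xs) \<in> E" using sip_edge[OF s, of 0] ne by (simp add: hd_conv_nth)
  have no_shorter: "(hd xs, last xs) \<notin> E ^^ j" if "j < length xs - 1" for j
  proof
    assume "(hd xs, last xs) \<in> E ^^ j"
    with x_hd have "(x, last xs) \<in> E ^^ Suc j" by (rule relpow_Suc_I2)
    moreover have "Suc j < length xs" using that by simp
    ultimately show False using lastN unfolding outN_iff by blast
  qed
  have "(hd xs, last xs) \<in> E ^^ (length xs - 1)"
    using dipath_seg[of E xs 0 "length xs - 1"] ind' ne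
    unfolding induced_dipath_def by (simp add: hd_conv_nth last_conv_nth)
  then have "last xs \<in> outN V E (length xs - 1) (hd xs)"
    using lastN no_shorter by (simp add: outN_iff)
  then show ?thesis using ind' unfolding sip_def by simp
qed

lemma induced_dipath_nonadjacent:
  assumes "induced_dipath E xs" "p + 1 < q" "q < length xs"
  shows "(xs ! p, xs ! q) \<notin> E \<and> (xs ! q, xs ! p) \<notin> E"
proof -
  have "\<forall>i j. i < length xs \<longrightarrow> j < length xs \<longrightarrow> (xs ! i, xs ! j) \<in> E \<longrightarrow> j = i + 1"
    using assms(1) unfolding induced_dipath_def by blast
  then show ?thesis using assms(2,3) by (metis add_lessD1 less_irrefl_nat less_trans not_add_less1)
qed

section \<open>The edges leaving the inner layers\<close>

lemma edges_leaving_inner_layers: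
  assumes mf: "m_free m E" and km: "k + 2 \<le> m"
  shows "edges_between E (inner_layers V E k v) (V - inner_layers V E k v)
       = edges_between E (outN V E (k + 1) v) (outN V E (k + 2) v)"
proof (rule set_eqI, rule iffI)
  fix e assume "e \<in> edges_between E (inner_layers V E k v) (V - inner_layers V E k v)"
  then obtain a b where e: "e = (a, b)" and ab: "(a, b) \<in> E"
    and a: "a \<in> inner_layers V E k v" and b: "b \<in> V" "b \<notin> inner_layers V E k v"
    unfolding edges_between_def by auto
  obtain i where i: "1 \<le> i" "i \<le> k + 1" and ai: "a \<in> outN V E i v"
    using a by (rule inner_layersE)
  obtain d where d: "d \<le> Suc i" "b \<in> outN V E d v" using outN_edge[OF ab ai b(1)] by blast
  have "d \<noteq> 0"
  proof
    assume "d = 0"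
    then have "b = v" using d by (simp add: outN_iff)
    then show False using no_edge_to_root[OF mf ai] ab i km by simp
  qed
  moreover have "\<not> d \<le> k + 1" using b(2) d(2) \<open>d \<noteq> 0\<close> by (simp add: outN_in_inner_layers_iff)
  ultimately have "d = k + 2" "i = k + 1" using d i by auto
  then show "e \<in> edges_between E (outN V E (k + 1) v) (outN V E (k + 2) v)"
    using e ab ai d by (auto simp: edges_between_def)
next
  fix e assume "e \<in> edges_between E (outN V E (k + 1) v) (outN V E (k + 2) v)"
  then obtain a b where e: "e = (a, b)" "(a, b) \<in> E"
    and a: "a \<in> outN V E (k + 1) v" and b: "b \<in> outN V E (k + 2) v"
    unfolding edges_between_def by auto
  have "b \<in> V" using b by (simp add: outN_iff)
  then show "e \<in> edges_between E (inner_layers V E k v) (V - inner_layers V E k v)"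
    using e a b unfolding edges_between_def by (simp add: outN_in_inner_layers_iff)
qed

text \<open>The triples of P_k(v) are exactly the edges from layer k+1 to layer k+2, prefixed by v:
  such an edge extends a geodesic to a geodesic walk of length k+2 < m.\<close>
lemma P_set_eq_edges:
  assumes dg: "digraph V E" and mf: "m_free m E" and km: "k + 3 \<le> m"
  shows "P_set V E k v = (\<lambda>(y, z). (v, y, z)) ` edges_between E (outN V E (k + 1) v) (outN V E (k + 2) v)"
proof (rule set_eqI, rule iffI)
  fix t assume "t \<in> P_set V E k v"
  then obtain y z ws where t: "t = (v, y, z)" and ws: "length ws = k" and s: "sip V E (v # ws @ [y, z])"
    unfolding P_set_def by auto
  let ?xs = "v # ws @ [y, z]"
  have y: "y \<in> outN V E (k + 1) v" using sip_outN[OF dg s, of "k + 1"] ws by (simp add: nth_append)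
  have z: "z \<in> outN V E (k + 2) v" using sip_outN[OF dg s, of "k + 2"] ws by (simp add: nth_append)
  have "(y, z) \<in> E" using sip_edge[OF s, of "k + 1"] ws by (simp add: nth_append)
  then show "t \<in> (\<lambda>(y, z). (v, y, z)) ` edges_between E (outN V E (k + 1) v) (outN V E (k + 2) v)"
    using t y z unfolding edges_between_def by auto
next
  fix t assume "t \<in> (\<lambda>(y, z). (v, y, z)) ` edges_between E (outN V E (k + 1) v) (outN V E (k + 2) v)"
  then obtain y z where t: "t = (v, y, z)" and yz: "(y, z) \<in> E" and y: "y \<in> outN V E (k + 1) v"
    and z: "z \<in> outN V E (k + 2) v" unfolding edges_between_def by auto
  obtain f where f0: "f 0 = v" and fy: "f (k + 1) = y" and fe: "\<forall>i<k + 1. (f i, f (Suc i)) \<in> E"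
    using y unfolding outN_iff relpow_fun_conv by blast
  define g where "g = f(k + 2 := z)"
  have ge: "\<forall>i<k + 2. (g i, g (Suc i)) \<in> E"
    using fe fy yz unfolding g_def by (auto simp: less_Suc_eq)
  have "sip V E (map g [0..<Suc (k + 2)])"
    by (rule geodesic_walk_sip[OF mf _ ge]) (use f0 z km in \<open>simp_all add: g_def\<close>)
  moreover have "map g [0..<Suc (k + 2)] = v # map g [1..<k + 1] @ [y, z]"
  proof -
    have "[0..<Suc (k + 2)] = [0..<Suc k] @ [k + 1, k + 2]" by simp
    also have "[0..<Suc k] = 0 # [1..<k + 1]" by (simp add: upt_conv_Cons del: upt_Suc)
    finally show ?thesis using f0 fy by (simp add: g_def del: upt_Suc)
  qed
  ultimately show "t \<in> P_set V E k v" unfolding P_set_def t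
    by (auto intro!: exI[of _ "map g [1..<k + 1]"])
qed

section \<open>Non-adjacent pairs across the cut\<close>

lemma P'_set_nonadjacent:
  assumes dg: "digraph V E" and k: "1 \<le> k" and i: "k \<le> i" and t: "(x, y, z) \<in> P'_set V E i v"
  shows "y \<in> outN V E 1 v \<and> z \<in> outN V E (i + 2) v
    \<and> (y, z) \<in> nonadjacent_pairs E (inner_layers V E k v) (V - inner_layers V E k v)"
proof -
  obtain ws where ws: "length ws = i" and s: "sip V E (x # y # ws @ [z])" and xv: "x = v"
    using t unfolding P'_set_def by auto
  let ?xs = "x # y # ws @ [z]"
  have y: "y \<in> outN V E 1 v" using sip_outN[OF dg s, of 1] xv by simp
  have z: "z \<in> outN V E (i + 2) v" using sip_outN[OF dg s, of "i + 2"] ws xv by (simp add: nth_append)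
  have ind: "induced_dipath E ?xs" using s unfolding sip_def by simp
  have "(y, z) \<notin> E" "(z, y) \<notin> E"
    using induced_dipath_nonadjacent[OF ind, of 1 "i + 2"] ws k i by (simp_all add: nth_append)
  then show ?thesis using y z i
    by (auto simp: nonadjacent_pairs_def outN_in_inner_layers_iff dest: outN_iff[THEN iffD1])
qed

text \<open>A triple (x,v,z) of Q'_i(v) with i \<le> k gives the non-adjacent pair (z,x), with z in
  layer i+1; x is outside L since the edge (x,v) would otherwise close a short cycle.\<close>
lemma Q'_set_nonadjacent:
  assumes dg: "digraph V E" and mf: "m_free m E" and km: "k + 2 \<le> m"
    and i: "i \<le> k" and t: "(x, y, z) \<in> Q'_set V E i v"
  shows "z \<in> outN V E (i + 1) v
    \<and> (z, x) \<in> nonadjacent_pairs E (inner_layers V E k v) (V - inner_layers V E k v)"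
proof -
  obtain ws where ws: "length ws = i" and s: "sip V E (x # y # ws @ [z])" and yv: "y = v"
    using t unfolding Q'_set_def by auto
  let ?xs = "x # y # ws @ [z]"
  have z: "z \<in> outN V E (i + 1) v"
    using sip_outN[OF dg sip_tl[OF s], of "i + 1"] ws yv by (simp add: nth_append)
  have xV: "x \<in> V" using sip_outN[OF dg s, of 0] by (simp add: outN_iff)
  have xv: "(x, v) \<in> E" using sip_edge[OF s, of 0] yv by simp
  have x_out: "x \<notin> inner_layers V E k v"
  proof
    assume "x \<in> inner_layers V E k v"
    then obtain j where "j \<le> k + 1" "x \<in> outN V E j v" by (rule inner_layersE)
    then show False using no_edge_to_root[OF mf _ _] xv km by force
  qed
  have ind: "induced_dipath E ?xs" using s unfolding sip_def by simp
  have "(x, z) \<notin> E" "(z, x) \<notin> E"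
    using induced_dipath_nonadjacent[OF ind, of 0 "i + 2"] ws by (simp_all add: nth_append)
  then show ?thesis using z xV x_out i
    by (auto simp: nonadjacent_pairs_def outN_in_inner_layers_iff)
qed

text \<open>Counting principle: injective images of a family of sets are pairwise disjoint when a
  labelling function recovers the index, so the size of their union is the sum of sizes.\<close>
lemma card_UN_labelled_images:
  assumes "finite I" and fin: "\<And>i. i \<in> I \<Longrightarrow> finite (g i ` S i)"
    and inj: "\<And>i. i \<in> I \<Longrightarrow> inj_on (g i) (S i)"
    and lbl: "\<And>i x. i \<in> I \<Longrightarrow> x \<in> S i \<Longrightarrow> label (g i x) = i"
  shows "card (\<Union>i\<in>I. g i ` S i) = (\<Sum>i\<in>I. card (S i))"
proof -
  have "card (\<Union>i\<in>I. g i ` S i) = (\<Sum>i\<in>I. card (g i ` S i))"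
  proof (rule card_UN_disjoint)
    show "\<forall>i\<in>I. \<forall>j\<in>I. i \<noteq> j \<longrightarrow> g i ` S i \<inter> g j ` S j = {}"
    proof (intro ballI impI equals0I)
      fix i j y assume ij: "i \<in> I" "j \<in> I" "i \<noteq> j" and "y \<in> g i ` S i \<inter> g j ` S j"
      then obtain a b where "a \<in> S i" "b \<in> S j" "y = g i a" "y = g j b" by blast
      then show False using lbl[of i a] lbl[of j b] ij by simp
    qed
  qed (use assms(1) fin in auto)
  also have "\<dots> = (\<Sum>i\<in>I. card (S i))" using inj by (simp add: card_image)
  finally show ?thesis .
qed

lemma s_num_le_nonadjacent_pairs:
  assumes dg: "digraph V E" and mf: "m_free m E" and k: "1 \<le> k" and km: "k + 2 \<le> m"
  shows "s_num m V E k v \<le> card (nonadjacent_pairs E (inner_layers V E k v) (V - inner_layers V E k v))"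
proof -
  let ?T = "nonadjacent_pairs E (inner_layers V E k v) (V - inner_layers V E k v)"
  let ?d = "depth V E v"
  define fP where "fP = (\<lambda>(x :: 'a, y :: 'a, z :: 'a). (y, z))"
  define fQ where "fQ = (\<lambda>(x :: 'a, y :: 'a, z :: 'a). (z, x))"
  let ?A = "\<Union>i\<in>{k..m - 3}. fP ` P'_set V E i v"
  let ?B = "\<Union>i\<in>{1..k}. fQ ` Q'_set V E i v"
  have finT: "finite ?T"
    using dg unfolding digraph_def nonadjacent_pairs_def inner_layers_def outN_def
    by (auto intro: finite_subset[of _ "V \<times> V"])
  have P': "?d y = 1 \<and> ?d z = i + 2 \<and> (y, z) \<in> ?T"
    if "i \<in> {k..m - 3}" "(x, y, z) \<in> P'_set V E i v" for i x y z
    using P'_set_nonadjacent[OF dg k _ that(2)] that(1) by (auto simp: depth_eq)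
  have Q': "?d z = i + 1 \<and> (z, x) \<in> ?T"
    if "i \<in> {1..k}" "(x, y, z) \<in> Q'_set V E i v" for i x y z
    using Q'_set_nonadjacent[OF dg mf km _ that(2)] that(1) by (auto simp: depth_eq)
  have subT: "?A \<subseteq> ?T" "?B \<subseteq> ?T" using P' Q' unfolding fP_def fQ_def by auto
  have "card ?A = (\<Sum>i = k..m - 3. card (P'_set V E i v))"
  proof (rule card_UN_labelled_images[where label = "\<lambda>(a, b). ?d b - 2"])
    fix i t assume i: "i \<in> {k..m - 3}" and t: "t \<in> P'_set V E i v"
    show "(\<lambda>(a, b). ?d b - 2) (fP t) = i" using P'[OF i] t unfolding fP_def by (cases t) auto
  next
    fix i assume "i \<in> {k..m - 3}"
    then show "finite (fP ` P'_set V E i v)" using subT(1) finT by (blast intro: finite_subset)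
    show "inj_on fP (P'_set V E i v)" unfolding inj_on_def P'_set_def fP_def by auto
  qed simp
  moreover have "card ?B = (\<Sum>i = 1..k. card (Q'_set V E i v))"
  proof (rule card_UN_labelled_images[where label = "\<lambda>(a, b). ?d a - 1"])
    fix i t assume i: "i \<in> {1..k}" and t: "t \<in> Q'_set V E i v"
    show "(\<lambda>(a, b). ?d a - 1) (fQ t) = i" using Q'[OF i] t unfolding fQ_def by (cases t) auto
  next
    fix i assume "i \<in> {1..k}"
    then show "finite (fQ ` Q'_set V E i v)" using subT(2) finT by (blast intro: finite_subset)
    show "inj_on fQ (Q'_set V E i v)" unfolding inj_on_def Q'_set_def fQ_def by auto
  qed simp
  moreover have "?A \<inter> ?B = {}" using P' Q' unfolding fP_def fQ_def by fastforce
  ultimately have "s_num m V E k v = card (?A \<union> ?B)"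
    unfolding s_num_def p'_num_def q'_num_def using finT subT
    by (simp add: card_Un_disjoint finite_subset)
  also have "\<dots> \<le> card ?T" using finT subT by (simp add: card_mono)
  finally show ?thesis .
qed

theorem mainTheorem7:
  fixes V :: "'a set" and E :: "('a \<times> 'a) set" and m k :: nat and v :: 'a
  assumes "m \<ge> 4" and "digraph V E" and "m_free m E" and "v \<in> V"
    and "1 \<le> k" and "k \<le> m - 3"
  defines "V1 \<equiv> (\<Union>i\<in>{1..k + 1}. outN V E i v)"
  defines "V2 \<equiv> V - V1"
  shows "edges_between E V1 V2 = edges_between E (outN V E (k + 1) v) (outN V E (k + 2) v)
    \<and> card (edges_between E V1 V2) = p_num V E k v
    \<and> card {(a, b). a \<in> V1 \<and> b \<in> V2 \<and> (a, b) \<notin> E \<and> (b, a) \<notin> E} \<ge> s_num m V E k v"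
proof -
  have km: "k + 3 \<le> m" using assms(1,6) by simp
  have V1: "V1 = inner_layers V E k v" unfolding V1_def inner_layers_def ..
  have cut: "edges_between E V1 V2 = edges_between E (outN V E (k + 1) v) (outN V E (k + 2) v)"
    unfolding V2_def V1 using edges_leaving_inner_layers[OF assms(3)] km by simp
  have "p_num V E k v = card (edges_between E (outN V E (k + 1) v) (outN V E (k + 2) v))"
    unfolding p_num_def P_set_eq_edges[OF assms(2,3) km] by (rule card_image) (auto simp: inj_on_def)
  moreover have "s_num m V E k v \<le> card (nonadjacent_pairs E V1 V2)"
    unfolding V2_def V1 using s_num_le_nonadjacent_pairs[OF assms(2,3,5)] km by simp
  ultimately show ?thesis using cut unfolding nonadjacent_pairs_def by simp
qed

end
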